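(* Let $A$ be any subset of $S$. Then $C_S(A)$ equals either $S$, or $K$, or $C_S(P)$ for some element $P \in S \setminus K$.
   Context: Standing conventions: $K$ is a field, $R = K[y]$, $\sigma$ is a $K$-algebra endomorphism of $R$ with $\deg_y(\sigma(y)) > 1$, and $\delta$ is a $K$-linear $\sigma$-derivation of $R$ ($\delta(ab) = \sigma(a)\delta(b) + \delta(a)b$). $S = R[x;\sigma,\delta]$ is the Ore extension (polynomials $\sum r_i x^i$, $r_i\in R$, with $xr = \sigma(r)x + \delta(r)$). For $A\subseteq S$, $C_S(A)$ is the set of elements of $S$ commuting with every element of $A$; $C_S(P)=C_S(\{P\})$. *)

theory Defs
  imports "HOL-Computational_Algebra.Polynomial"
begin

(* Elements of S = R[x;sigma,delta], R = K[y], are represented as polynomials in x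
   with coefficients in R, i.e. as values of type 'a poly poly:
   the polynomial  sum_i r_i x^i  is the 'a poly poly whose i-th coefficient is r_i. *)

(* left multiplication by x:  x * (sum r_i x^i) = sum (sigma(r_i) x^(i+1) + delta(r_i) x^i) *)
definition ore_xmul :: "('a::comm_ring_1 poly \<Rightarrow> 'a poly) \<Rightarrow> ('a poly \<Rightarrow> 'a poly)
    \<Rightarrow> 'a poly poly \<Rightarrow> 'a poly poly" where
  "ore_xmul \<sigma> \<delta> Q = pCons 0 (map_poly \<sigma> Q) + map_poly \<delta> Q"

definition ore_mult :: "('a::comm_ring_1 poly \<Rightarrow> 'a poly) \<Rightarrow> ('a poly \<Rightarrow> 'a poly)
    \<Rightarrow> 'a poly poly \<Rightarrow> 'a poly poly \<Rightarrow> 'a poly poly" where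
  "ore_mult \<sigma> \<delta> P Q = (\<Sum>i\<le>degree P. smult (coeff P i) ((ore_xmul \<sigma> \<delta> ^^ i) Q))"

definition ore_centralizer :: "('a::comm_ring_1 poly \<Rightarrow> 'a poly) \<Rightarrow> ('a poly \<Rightarrow> 'a poly)
    \<Rightarrow> 'a poly poly set \<Rightarrow> 'a poly poly set" where
  "ore_centralizer \<sigma> \<delta> A = {Q. \<forall>P\<in>A. ore_mult \<sigma> \<delta> P Q = ore_mult \<sigma> \<delta> Q P}"

definition ore_K :: "'a::comm_ring_1 poly poly set" where
  "ore_K = range (\<lambda>c. [:[:c:]:])"

definition ore_sigma_ok :: "('a::field poly \<Rightarrow> 'a poly) \<Rightarrow> bool" where
  "ore_sigma_ok \<sigma> \<longleftrightarrow>
     (\<forall>a b. \<sigma> (a + b) = \<sigma> a + \<sigma> b) \<and>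
     (\<forall>a b. \<sigma> (a * b) = \<sigma> a * \<sigma> b) \<and>
     (\<forall>c a. \<sigma> (smult c a) = smult c (\<sigma> a)) \<and>
     \<sigma> 1 = 1 \<and>
     degree (\<sigma> [:0, 1:]) > 1"

definition ore_delta_ok :: "('a::field poly \<Rightarrow> 'a poly) \<Rightarrow> ('a poly \<Rightarrow> 'a poly) \<Rightarrow> bool" where
  "ore_delta_ok \<sigma> \<delta> \<longleftrightarrow>
     (\<forall>a b. \<delta> (a + b) = \<delta> a + \<delta> b) \<and>
     (\<forall>c a. \<delta> (smult c a) = smult c (\<delta> a)) \<and>
     (\<forall>a b. \<delta> (a * b) = \<sigma> a * \<delta> b + \<delta> a * b)"

end

theory Submission
  imports Defs
begin

text \<open>Multiplication in \<open>S\<close> adds \<open>x\<close>-degrees, and the leading coefficient of \<open>P Q\<close> is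
  \<open>lc(P) \<sigma>\<^bsup>deg P\<^esup>(lc Q)\<close>. Since \<open>\<sigma>\<^sup>k\<close> is substitution of a polynomial of \<open>y\<close>-degree
  \<open>(deg\<^sub>y \<sigma>(y))\<^sup>k > 1\<close>, \<open>S\<close> is a domain, and two nonzero elements of the same degree that commute
  with a fixed \<open>P\<close> of positive degree have \<open>K\<close>-proportional leading coefficients; so the elements
  of \<open>C(P)\<close> of degree \<open>< N\<close> span a \<open>K\<close>-space of dimension at most \<open>N\<close>.
  Amitsur's argument then shows that \<open>C(P)\<close> is commutative: pick \<open>Q\<^sub>0 \<in> C(P)\<close> whose degree has
  minimal gcd with \<open>deg P\<close>; the products \<open>P\<^sup>a Q\<^sub>0\<^sup>b\<close> approximate every element of \<open>C(P)\<close> up to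
  bounded degree, so by the dimension bound a nonzero \<open>K\<close>-polynomial \<open>F\<close> in \<open>P\<close> carries any
  \<open>X \<in> C(P)\<close> into the double centralizer of \<open>{P, Q\<^sub>0}\<close>, and \<open>F\<close> can be cancelled. A non-scalar
  element of \<open>K[y]\<close> only commutes with \<open>K[y]\<close>. Hence commutation is transitive on \<open>S - K\<close>, and
  \<open>C(A)\<close> is \<open>S\<close> when \<open>A \<subseteq> K\<close>, is \<open>K\<close> when no element outside \<open>K\<close> commutes with \<open>A\<close>, and is
  \<open>C(Q)\<close> for any \<open>Q \<in> C(A) - K\<close> otherwise.\<close>

lemma smult_sum_right: "smult a (sum f S) = (\<Sum>i\<in>S. smult a (f i))"
  by (induction S rule: infinite_finite_induct) (simp_all add: smult_add_right)

lemma degree_eq_if_pcompose_mult_eq: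
  fixes a b H :: "'a::field poly"
  assumes "degree H > 1" and "a \<noteq> 0" and "b \<noteq> 0"
    and "pcompose a H * b = a * pcompose b H"
  shows "degree a = degree b"
proof -
  have "pcompose a H \<noteq> 0" and "pcompose b H \<noteq> 0"
    using assms(1-3) by (simp_all add: pcompose_eq_0_iff)
  then have "degree a * degree H + degree b = degree a + degree b * degree H"
    using arg_cong[OF assms(4), of degree] assms(2,3) by (simp add: degree_mult_eq degree_pcompose)
  then have "degree a * (degree H - 1) = degree b * (degree H - 1)"
    using assms(1) by (simp add: diff_mult_distrib2 algebra_simps)
  with assms(1) show ?thesis
    by simp
qed

text \<open>Subtracting the right multiple of \<open>b\<close> from \<open>a\<close> preserves the relation and kills the
  coefficient of degree \<open>deg b\<close>, whereas the relation forces every nonzero solution to have degree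
  \<open>deg b\<close>.\<close>
lemma pcompose_mult_eq_imp_proportional:
  fixes a b H :: "'a::field poly"
  assumes H: "degree H > 1" and b: "b \<noteq> 0"
    and eq: "pcompose a H * b = a * pcompose b H"
  shows "\<exists>c. a = smult c b"
proof (cases "a = 0")
  case False
  define c where "c = lead_coeff a / lead_coeff b"
  define a' where "a' = a - smult c b"
  have "pcompose a' H * b = pcompose a H * b - smult c (pcompose b H * b)"
    unfolding a'_def by (simp only: pcompose_diff pcompose_smult left_diff_distrib mult_smult_left)
  also have "\<dots> = a * pcompose b H - smult c (b * pcompose b H)"
    by (simp only: eq mult.commute[of "pcompose b H" b])
  also have "\<dots> = a' * pcompose b H"
    unfolding a'_def by (simp only: left_diff_distrib mult_smult_left)
  finally have eq': "pcompose a' H * b = a' * pcompose b H" .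
  have "coeff a' (degree b) = 0"
    using degree_eq_if_pcompose_mult_eq[OF H False b eq] b by (simp add: a'_def c_def)
  have "a' = 0"
  proof (rule ccontr)
    assume "a' \<noteq> 0"
    with \<open>coeff a' (degree b) = 0\<close> show False
      using degree_eq_if_pcompose_mult_eq[OF H _ b eq'] by (metis leading_coeff_0_iff)
  qed
  then show ?thesis
    by (auto simp: a'_def)
qed auto

lemma linear_dependence_elimination:
  fixes z :: "'i \<Rightarrow> 'a::comm_ring_1 poly poly"
  assumes "finite I" and "i0 \<in> I" and "\<exists>i\<in>I - {i0}. c i \<noteq> 0"
    and "(\<Sum>i\<in>I - {i0}. smult [:c i:] (z i - smult [:\<gamma> i:] (z i0))) = 0"
  shows "\<exists>d. (\<exists>i\<in>I. d i \<noteq> 0) \<and> (\<Sum>i\<in>I. smult [:d i:] (z i)) = 0"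
proof -
  define s where "s = (\<Sum>j\<in>I - {i0}. c j * \<gamma> j)"
  define d where "d = c(i0 := - s)"
  have "(\<Sum>i\<in>I - {i0}. smult [:c i:] (z i))
      = (\<Sum>i\<in>I - {i0}. smult [:c i:] (z i - smult [:\<gamma> i:] (z i0)) + smult [:c i * \<gamma> i:] (z i0))"
    by (rule sum.cong) (simp_all add: smult_diff_right mult.commute)
  also have "\<dots> = (\<Sum>i\<in>I - {i0}. smult [:c i * \<gamma> i:] (z i0))"
    using assms(4) by (simp add: sum.distrib)
  also have "\<dots> = smult [:s:] (z i0)"
    by (simp add: s_def smult_sum flip: sum_to_poly)
  finally have "(\<Sum>i\<in>I - {i0}. smult [:d i:] (z i)) = smult [:s:] (z i0)"
    by (simp add: d_def)
  then have "(\<Sum>i\<in>I. smult [:d i:] (z i)) = 0"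
    using assms(1,2) by (simp add: sum.remove d_def flip: smult_add_left)
  moreover have "\<exists>i\<in>I. d i \<noteq> 0"
    using assms(3) by (auto simp: d_def)
  ultimately show ?thesis
    by blast
qed

lemma gcd_linear_combination_nat:
  fixes q y n :: nat
  assumes "n > 0"
  shows "\<exists>a b. gcd (a * q + b * y) n = gcd (gcd q y) n"
proof -
  obtain u v :: int where uv: "u * int q + v * int y = int (gcd q y)"
    using bezout_int[of "int q" "int y"] by auto
  define a b where "a = nat (u mod int n)" and "b = nat (v mod int n)"
  have "int a = u mod int n" and "int b = v mod int n"
    using assms by (simp_all add: a_def b_def)
  then have "int (a * q + b * y) mod int n = (u mod int n * int q + v mod int n * int y) mod int n"
    by simp
  also have "\<dots> = (u * int q + v * int y) mod int n"
    by (metis mod_add_cong mod_mult_left_eq)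
  finally have "int (a * q + b * y) mod int n = (u * int q + v * int y) mod int n" .
  then have "int ((a * q + b * y) mod n) = int (gcd q y mod n)"
    using uv by (simp only: of_nat_mod)
  then have "(a * q + b * y) mod n = gcd q y mod n"
    by simp
  then have "gcd (a * q + b * y) n = gcd (gcd q y) n"
    by (metis gcd_red_nat gcd.commute)
  then show ?thesis
    by blast
qed

lemma nat_combination_if_gcd_dvd:
  fixes q t n :: nat
  assumes n: "n > 0" and dvd: "gcd q n dvd t" and big: "n * q \<le> t"
  shows "\<exists>a b. a * n + b * q = t"
proof -
  obtain u v :: int where uv: "u * int q + v * int n = int (gcd q n)"
    using bezout_int[of "int q" "int n"] by auto
  obtain s where s: "t = gcd q n * s"
    using dvd by blast
  define b where "b = nat ((u * int s) mod int n)"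
  have ib: "int b = (u * int s) mod int n"
    using n by (simp add: b_def)
  then have "b < n"
    using n by (metis pos_mod_bound of_nat_0_less_iff of_nat_less_iff)
  then have bq: "b * q \<le> t"
    using big by (meson less_imp_le_nat mult_le_mono1 order.trans)
  have "int (b * q) mod int n = (int s * (u * int q)) mod int n"
    by (simp add: ib mod_simps ac_simps)
  also have "int s * (u * int q) = int s * int (gcd q n) + (- (int s * v)) * int n"
    using uv by (simp add: algebra_simps flip: uv)
  also have "(int s * int (gcd q n) + (- (int s * v)) * int n) mod int n = int t mod int n"
    unfolding mod_mult_self1 using s by (simp add: mult.commute)
  finally have "int n dvd int (t - b * q)"
    using bq by (simp add: mod_eq_dvd_iff of_nat_diff dvd_diff_commute)
  then obtain a where "t - b * q = n * a"
    by (metis of_nat_dvd_iff dvdE)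
  then have "a * n + b * q = t"
    using bq by (simp add: mult.commute)
  then show ?thesis
    by blast
qed

section \<open>Ore multiplication\<close>

locale ore_algebra =
  fixes \<sigma> \<delta> :: "'a::comm_ring_1 poly \<Rightarrow> 'a poly"
  assumes sigma_add: "\<sigma> (a + b) = \<sigma> a + \<sigma> b"
    and sigma_mult: "\<sigma> (a * b) = \<sigma> a * \<sigma> b"
    and sigma_smult: "\<sigma> (smult c a) = smult c (\<sigma> a)"
    and sigma_one: "\<sigma> 1 = 1"
    and delta_add: "\<delta> (a + b) = \<delta> a + \<delta> b"
    and delta_smult: "\<delta> (smult c a) = smult c (\<delta> a)"
    and delta_mult: "\<delta> (a * b) = \<sigma> a * \<delta> b + \<delta> a * b"
begin

abbreviation xmul :: "'a poly poly \<Rightarrow> 'a poly poly" where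
  "xmul \<equiv> ore_xmul \<sigma> \<delta>"

abbreviation ore_times :: "'a poly poly \<Rightarrow> 'a poly poly \<Rightarrow> 'a poly poly" (infixl "\<cdot>" 70) where
  "P \<cdot> Q \<equiv> ore_mult \<sigma> \<delta> P Q"

lemma sigma_0 [simp]: "\<sigma> 0 = 0"
  using sigma_add[of 0 0] by simp

lemma delta_0 [simp]: "\<delta> 0 = 0"
  using delta_add[of 0 0] by simp

lemma sigma_diff: "\<sigma> (a - b) = \<sigma> a - \<sigma> b"
  using sigma_add[of "a - b" b] by (simp add: eq_diff_eq)

lemma delta_diff: "\<delta> (a - b) = \<delta> a - \<delta> b"
  using delta_add[of "a - b" b] by (simp add: eq_diff_eq)

lemma sigma_const [simp]: "\<sigma> [:c:] = [:c:]"
  using sigma_smult[of c 1] by (simp add: sigma_one)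

lemma delta_one: "\<delta> 1 = 0"
  using delta_mult[of 1 1] by (simp add: sigma_one)

lemma delta_const [simp]: "\<delta> [:c:] = 0"
  using delta_smult[of c 1] by (simp add: delta_one)

lemma sigma_eq_pcompose: "\<sigma> a = pcompose a (\<sigma> [:0, 1:])"
proof (induction a)
  case (pCons c p)
  have "pCons c p = [:c:] + [:0, 1:] * p"
    by simp
  then have "\<sigma> (pCons c p) = [:c:] + \<sigma> [:0, 1:] * \<sigma> p"
    by (simp only: sigma_add sigma_mult sigma_const)
  with pCons.IH show ?case
    by (simp add: pcompose_pCons)
qed simp

lemma sigma_power_eq_pcompose: "(\<sigma> ^^ k) a = pcompose a ((\<sigma> ^^ k) [:0, 1:])"
proof (induction k arbitrary: a)
  case (Suc k)
  have "(\<sigma> ^^ Suc k) a = pcompose ((\<sigma> ^^ k) a) (\<sigma> [:0, 1:])"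
    unfolding funpow.simps o_apply by (rule sigma_eq_pcompose)
  also have "\<dots> = pcompose a (pcompose ((\<sigma> ^^ k) [:0, 1:]) (\<sigma> [:0, 1:]))"
    by (simp only: Suc.IH[of a] pcompose_assoc)
  also have "\<dots> = pcompose a ((\<sigma> ^^ Suc k) [:0, 1:])"
    unfolding funpow.simps o_apply by (simp only: sigma_eq_pcompose[of "(\<sigma> ^^ k) [:0, 1:]"])
  finally show ?case .
qed simp

lemma coeff_xmul:
  "coeff (xmul Q) j = (case j of 0 \<Rightarrow> 0 | Suc i \<Rightarrow> \<sigma> (coeff Q i)) + \<delta> (coeff Q j)"
  by (simp add: ore_xmul_def coeff_pCons coeff_map_poly split: nat.splits)

lemma xmul_0 [simp]: "xmul 0 = 0"
  by (rule poly_eqI) (simp add: coeff_xmul split: nat.splits)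

lemma xmul_add: "xmul (A + B) = xmul A + xmul B"
  by (rule poly_eqI) (simp add: coeff_xmul sigma_add delta_add split: nat.splits)

lemma xmul_diff: "xmul (A - B) = xmul A - xmul B"
  by (rule poly_eqI) (simp add: coeff_xmul sigma_diff delta_diff split: nat.splits)

lemma xmul_sum: "xmul (sum f S) = (\<Sum>i\<in>S. xmul (f i))"
  by (induction S rule: infinite_finite_induct) (simp_all add: xmul_add)

lemma xmul_smult: "xmul (smult r Q) = smult (\<sigma> r) (xmul Q) + smult (\<delta> r) Q"
  by (rule poly_eqI) (simp add: coeff_xmul sigma_mult delta_mult algebra_simps split: nat.splits)

lemma xmul_smult_const: "xmul (smult [:c:] Q) = smult [:c:] (xmul Q)"
  using xmul_smult[of "[:c:]" Q] by simp

lemma xmul_monom_one: "xmul (monom 1 k) = monom 1 (Suc k)"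
  by (rule poly_eqI) (simp add: coeff_xmul coeff_monom sigma_one delta_one split: nat.splits)

lemma degree_xmul_le: "degree (xmul Q) \<le> Suc (degree Q)"
proof (rule degree_le, intro allI impI)
  fix j
  assume "Suc (degree Q) < j"
  then show "coeff (xmul Q) j = 0"
    by (simp add: coeff_xmul coeff_eq_0 split: nat.splits)
qed

lemma xmul_power_add: "(xmul ^^ k) (A + B) = (xmul ^^ k) A + (xmul ^^ k) B"
  by (induction k) (simp_all add: xmul_add)

lemma xmul_power_diff: "(xmul ^^ k) (A - B) = (xmul ^^ k) A - (xmul ^^ k) B"
  by (induction k) (simp_all add: xmul_diff)

lemma xmul_power_0 [simp]: "(xmul ^^ k) 0 = 0"
  by (induction k) simp_all

lemma xmul_power_smult_const: "(xmul ^^ k) (smult [:c:] Q) = smult [:c:] ((xmul ^^ k) Q)"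
  by (induction k) (simp_all add: xmul_smult_const)

lemma xmul_power_one: "(xmul ^^ k) 1 = monom 1 k"
proof (induction k)
  case 0
  show ?case by (simp add: monom_0 one_pCons)
qed (simp add: xmul_monom_one)

lemma degree_xmul_power_le: "degree ((xmul ^^ k) Q) \<le> degree Q + k"
proof (induction k)
  case (Suc k)
  then show ?case
    using degree_xmul_le[of "(xmul ^^ k) Q"] by simp
qed simp

lemma coeff_xmul_power_top: "coeff ((xmul ^^ k) Q) (degree Q + k) = (\<sigma> ^^ k) (lead_coeff Q)"
proof (induction k)
  case (Suc k)
  have "coeff ((xmul ^^ k) Q) (Suc (degree Q + k)) = 0"
    using degree_xmul_power_le[of k Q] by (intro coeff_eq_0) simp
  then have "coeff (xmul ((xmul ^^ k) Q)) (Suc (degree Q + k)) = \<sigma> ((\<sigma> ^^ k) (lead_coeff Q))"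
    by (simp only: coeff_xmul nat.case Suc.IH delta_0 add_0_right)
  then show ?case
    by (simp only: funpow.simps o_apply add_Suc_right)
qed simp

lemma ore_mult_eq_sum:
  "degree P \<le> N \<Longrightarrow> P \<cdot> Q = (\<Sum>i\<le>N. smult (coeff P i) ((xmul ^^ i) Q))"
  unfolding ore_mult_def by (rule sum.mono_neutral_left) (auto simp: coeff_eq_0)

lemma ore_mult_0_left [simp]: "0 \<cdot> Q = 0"
  by (simp add: ore_mult_def)

lemma ore_mult_0_right [simp]: "P \<cdot> 0 = 0"
  by (simp add: ore_mult_def)

lemma ore_mult_const_left: "[:r:] \<cdot> Q = smult r Q"
  by (simp add: ore_mult_def)

lemma ore_mult_add_left: "(P1 + P2) \<cdot> Q = P1 \<cdot> Q + P2 \<cdot> Q"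
proof -
  have "degree (P1 + P2) \<le> max (degree P1) (degree P2)"
    by (rule degree_add_le) auto
  then show ?thesis
    by (simp add: ore_mult_eq_sum[of _ "max (degree P1) (degree P2)"] sum.distrib smult_add_left)
qed

lemma ore_mult_diff_left: "(P1 - P2) \<cdot> Q = P1 \<cdot> Q - P2 \<cdot> Q"
proof -
  have "degree (P1 - P2) \<le> max (degree P1) (degree P2)"
    by (rule degree_diff_le) auto
  then show ?thesis
    by (simp add: ore_mult_eq_sum[of _ "max (degree P1) (degree P2)"] sum_subtractf smult_diff_left)
qed

lemma ore_mult_smult_left: "smult r P \<cdot> Q = smult r (P \<cdot> Q)"
  using degree_smult_le[of r P]
  by (simp add: ore_mult_eq_sum[of _ "degree P"] smult_sum_right)

lemma ore_mult_sum_left: "sum f S \<cdot> Q = (\<Sum>i\<in>S. f i \<cdot> Q)"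
  by (induction S rule: infinite_finite_induct) (simp_all add: ore_mult_add_left)

lemma ore_mult_add_right: "P \<cdot> (Q1 + Q2) = P \<cdot> Q1 + P \<cdot> Q2"
  by (simp add: ore_mult_def xmul_power_add smult_add_right sum.distrib)

lemma ore_mult_diff_right: "P \<cdot> (Q1 - Q2) = P \<cdot> Q1 - P \<cdot> Q2"
  by (simp add: ore_mult_def xmul_power_diff smult_diff_right sum_subtractf)

lemma ore_mult_smult_const_right: "P \<cdot> smult [:c:] Q = smult [:c:] (P \<cdot> Q)"
  by (simp add: ore_mult_def xmul_power_smult_const smult_sum_right mult.commute)

lemma ore_mult_pCons_0_left: "pCons 0 A \<cdot> T = A \<cdot> xmul T"
proof -
  have "pCons 0 A \<cdot> T = (\<Sum>i\<le>Suc (degree A). smult (coeff (pCons 0 A) i) ((xmul ^^ i) T))"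
    by (rule ore_mult_eq_sum) (simp add: degree_pCons_le)
  also have "\<dots> = (\<Sum>i\<le>degree A. smult (coeff A i) ((xmul ^^ i) (xmul T)))"
    by (subst sum.atMost_Suc_shift) (simp add: funpow_Suc_right del: funpow.simps)
  also have "\<dots> = A \<cdot> xmul T"
    by (simp add: ore_mult_def)
  finally show ?thesis .
qed

lemma ore_mult_map_poly_left:
  "f 0 = 0 \<Longrightarrow> map_poly f A \<cdot> T = (\<Sum>i\<le>degree A. smult (f (coeff A i)) ((xmul ^^ i) T))"
  by (subst ore_mult_eq_sum[OF map_poly_degree_leq]) (simp add: coeff_map_poly)

text \<open>The key case of associativity; the twisted Leibniz rule for \<open>\<delta>\<close> enters through
  \<open>xmul_smult\<close>.\<close>
lemma ore_mult_xmul_left: "xmul P \<cdot> T = xmul (P \<cdot> T)"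
proof -
  have "xmul P \<cdot> T = map_poly \<sigma> P \<cdot> xmul T + map_poly \<delta> P \<cdot> T"
    by (simp add: ore_xmul_def ore_mult_add_left ore_mult_pCons_0_left)
  also have "\<dots> = (\<Sum>i\<le>degree P. smult (\<sigma> (coeff P i)) ((xmul ^^ i) (xmul T))
      + smult (\<delta> (coeff P i)) ((xmul ^^ i) T))"
    by (simp add: ore_mult_map_poly_left sum.distrib)
  also have "\<dots> = (\<Sum>i\<le>degree P. xmul (smult (coeff P i) ((xmul ^^ i) T)))"
    by (simp add: xmul_smult funpow_swap1)
  also have "\<dots> = xmul (P \<cdot> T)"
    by (simp add: ore_mult_def xmul_sum)
  finally show ?thesis .
qed

lemma ore_mult_xmul_power_left: "(xmul ^^ k) P \<cdot> T = (xmul ^^ k) (P \<cdot> T)"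
  by (induction k) (simp_all add: ore_mult_xmul_left)

lemma ore_mult_assoc: "(P \<cdot> Q) \<cdot> T = P \<cdot> (Q \<cdot> T)"
proof -
  have "(P \<cdot> Q) \<cdot> T = (\<Sum>i\<le>degree P. smult (coeff P i) ((xmul ^^ i) Q \<cdot> T))"
    unfolding ore_mult_def[of \<sigma> \<delta> P Q] by (simp add: ore_mult_sum_left ore_mult_smult_left)
  also have "\<dots> = P \<cdot> (Q \<cdot> T)"
    by (simp add: ore_mult_xmul_power_left ore_mult_def[of \<sigma> \<delta> P])
  finally show ?thesis .
qed

lemma ore_mult_one_right: "P \<cdot> 1 = P"
  by (simp add: ore_mult_def xmul_power_one smult_monom poly_as_sum_of_monoms)

lemma degree_ore_mult_le: "degree (P \<cdot> Q) \<le> degree P + degree Q"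
  unfolding ore_mult_def
proof (rule degree_sum_le)
  fix i
  assume "i \<in> {..degree P}"
  moreover have "degree (smult (coeff P i) ((xmul ^^ i) Q)) \<le> degree Q + i"
    by (rule order.trans[OF degree_smult_le degree_xmul_power_le])
  ultimately show "degree (smult (coeff P i) ((xmul ^^ i) Q)) \<le> degree P + degree Q"
    by simp
qed simp

lemma coeff_ore_mult_top:
  "coeff (P \<cdot> Q) (degree P + degree Q) = lead_coeff P * (\<sigma> ^^ degree P) (lead_coeff Q)"
proof -
  let ?top = "lead_coeff P * (\<sigma> ^^ degree P) (lead_coeff Q)"
  have top_term: "coeff (smult (coeff P i) ((xmul ^^ i) Q)) (degree P + degree Q)
      = (if i = degree P then ?top else 0)" if "i \<le> degree P" for i
  proof (cases "i = degree P")
    case True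
    then show ?thesis
      using coeff_xmul_power_top[of i Q] by (simp add: add.commute)
  next
    case False
    with that have "degree ((xmul ^^ i) Q) < degree P + degree Q"
      using degree_xmul_power_le[of i Q] by linarith
    with False show ?thesis
      by (simp add: coeff_eq_0)
  qed
  have "coeff (P \<cdot> Q) (degree P + degree Q) = (\<Sum>i\<le>degree P. if i = degree P then ?top else 0)"
    unfolding ore_mult_def coeff_sum by (rule sum.cong[OF refl], rule top_term, simp)
  also have "\<dots> = ?top"
    by simp
  finally show ?thesis .
qed

definition commute :: "'a poly poly \<Rightarrow> 'a poly poly \<Rightarrow> bool" where
  "commute X Y \<longleftrightarrow> X \<cdot> Y = Y \<cdot> X"

lemma ore_centralizer_eq: "ore_centralizer \<sigma> \<delta> A = {Z. \<forall>P\<in>A. commute P Z}"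
  by (simp add: ore_centralizer_def commute_def)

lemma commute_sym: "commute X Y \<longleftrightarrow> commute Y X"
  by (auto simp: commute_def)

lemma commute_refl [simp]: "commute X X"
  by (simp add: commute_def)

lemma commute_0_right [simp]: "commute X 0"
  by (simp add: commute_def)

lemma commute_add_right: "commute X Y \<Longrightarrow> commute X Z \<Longrightarrow> commute X (Y + Z)"
  by (simp add: commute_def ore_mult_add_left ore_mult_add_right)

lemma commute_diff_right: "commute X Y \<Longrightarrow> commute X Z \<Longrightarrow> commute X (Y - Z)"
  by (simp add: commute_def ore_mult_diff_left ore_mult_diff_right)

lemma commute_smult_const_right: "commute X Y \<Longrightarrow> commute X (smult [:c:] Y)"
  by (simp add: commute_def ore_mult_smult_left ore_mult_smult_const_right)

lemma commute_sum_right: "(\<And>i. i \<in> S \<Longrightarrow> commute X (f i)) \<Longrightarrow> commute X (sum f S)"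
  by (induction S rule: infinite_finite_induct) (simp_all add: commute_add_right)

lemma commute_mult_right: "commute X Y \<Longrightarrow> commute X Z \<Longrightarrow> commute X (Y \<cdot> Z)"
  unfolding commute_def by (metis ore_mult_assoc)

lemma commute_const_right: "commute X [:[:c:]:]"
proof -
  have "[:[:c:]:] = smult [:c:] (1 :: 'a poly poly)"
    by (simp add: one_pCons)
  then have "X \<cdot> [:[:c:]:] = smult [:c:] (X \<cdot> 1)"
    by (simp only: ore_mult_smult_const_right)
  then show ?thesis
    by (simp add: commute_def ore_mult_const_left ore_mult_one_right)
qed

lemma commute_one_right: "commute X 1"
  using commute_const_right[of X 1] by (simp add: one_pCons)

lemma commute_ore_K: "Z \<in> ore_K \<Longrightarrow> commute Z X"
  unfolding ore_K_def using commute_const_right commute_sym by blast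

lemma commute_degree_0: "degree X = 0 \<Longrightarrow> degree Y = 0 \<Longrightarrow> commute X Y"
  by (auto simp: commute_def ore_mult_const_left mult.commute elim!: degree_eq_zeroE)

primrec ore_power :: "'a poly poly \<Rightarrow> nat \<Rightarrow> 'a poly poly" where
  "ore_power X 0 = 1"
| "ore_power X (Suc k) = X \<cdot> ore_power X k"

lemma commute_ore_power_right: "commute Y X \<Longrightarrow> commute Y (ore_power X k)"
  by (induction k) (simp_all add: commute_mult_right commute_one_right)

end

section \<open>Degrees in the Ore extension\<close>

locale ore_polynomial = ore_algebra \<sigma> \<delta> for \<sigma> \<delta> :: "'a::field poly \<Rightarrow> 'a poly" +
  assumes degree_sigma_X: "degree (\<sigma> [:0, 1:]) > 1"

lemma ore_polynomialI:
  assumes "ore_sigma_ok \<sigma>" and "ore_delta_ok \<sigma> \<delta>"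
  shows "ore_polynomial \<sigma> \<delta>"
  by (intro ore_polynomial.intro ore_algebra.intro ore_polynomial_axioms.intro)
    (use assms in \<open>simp_all add: ore_sigma_ok_def ore_delta_ok_def\<close>)

context ore_polynomial
begin

lemma degree_sigma_power_X: "degree ((\<sigma> ^^ k) [:0, 1:]) = degree (\<sigma> [:0, 1:]) ^ k"
proof (induction k)
  case (Suc k)
  then show ?case
    using sigma_eq_pcompose[of "(\<sigma> ^^ k) [:0, 1:]"] by (simp add: degree_pcompose)
qed simp

lemma degree_sigma_power: "degree ((\<sigma> ^^ k) a) = degree a * degree (\<sigma> [:0, 1:]) ^ k"
  by (subst sigma_power_eq_pcompose) (simp add: degree_pcompose degree_sigma_power_X)

lemma sigma_power_eq_0_iff [simp]: "(\<sigma> ^^ k) a = 0 \<longleftrightarrow> a = 0"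
proof -
  have "degree ((\<sigma> ^^ k) [:0, 1:]) > 0"
    using degree_sigma_X by (simp add: degree_sigma_power_X)
  then show ?thesis
    by (subst sigma_power_eq_pcompose) (rule pcompose_eq_0_iff)
qed

lemma degree_ore_mult:
  assumes "P \<noteq> 0" and "Q \<noteq> 0"
  shows "degree (P \<cdot> Q) = degree P + degree Q"
proof (rule antisym)
  have "coeff (P \<cdot> Q) (degree P + degree Q) \<noteq> 0"
    using assms by (simp add: coeff_ore_mult_top)
  then show "degree P + degree Q \<le> degree (P \<cdot> Q)"
    by (rule le_degree)
qed (rule degree_ore_mult_le)

lemma lead_coeff_ore_mult:
  "P \<noteq> 0 \<Longrightarrow> Q \<noteq> 0 \<Longrightarrow> lead_coeff (P \<cdot> Q) = lead_coeff P * (\<sigma> ^^ degree P) (lead_coeff Q)"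
  by (simp add: degree_ore_mult coeff_ore_mult_top)

lemma ore_mult_eq_0_iff: "P \<cdot> Q = 0 \<longleftrightarrow> P = 0 \<or> Q = 0"
proof (cases "P = 0 \<or> Q = 0")
  case False
  then have "lead_coeff (P \<cdot> Q) \<noteq> 0"
    by (simp add: lead_coeff_ore_mult)
  with False show ?thesis
    by auto
qed auto

lemma ore_mult_left_cancel:
  assumes "F \<noteq> 0" and "F \<cdot> A = F \<cdot> B"
  shows "A = B"
proof -
  have "F \<cdot> (A - B) = 0"
    using assms(2) by (simp add: ore_mult_diff_right)
  with assms(1) show ?thesis
    by (simp add: ore_mult_eq_0_iff)
qed

lemma sigma_power_X_degree_gt_1: "n > 0 \<Longrightarrow> degree ((\<sigma> ^^ n) [:0, 1:]) > 1"
  using one_less_power[OF degree_sigma_X] by (simp add: degree_sigma_power_X)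

lemma ore_power_nonzero: "X \<noteq> 0 \<Longrightarrow> ore_power X k \<noteq> 0"
  by (induction k) (simp_all add: ore_mult_eq_0_iff)

lemma degree_ore_power: "X \<noteq> 0 \<Longrightarrow> degree (ore_power X k) = k * degree X"
  by (induction k) (simp_all add: degree_ore_mult ore_power_nonzero)

lemma commute_cancel_left:
  assumes "F \<noteq> 0" and "commute Y F" and "commute Y (F \<cdot> X)"
  shows "commute Y X"
proof -
  have "F \<cdot> (X \<cdot> Y) = (F \<cdot> X) \<cdot> Y"
    by (simp add: ore_mult_assoc)
  also have "\<dots> = (Y \<cdot> F) \<cdot> X"
    using assms(3) by (simp add: commute_def ore_mult_assoc)
  also have "\<dots> = F \<cdot> (Y \<cdot> X)"
    using assms(2) by (simp add: commute_def ore_mult_assoc)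
  finally show ?thesis
    using ore_mult_left_cancel[OF assms(1)] by (simp add: commute_def)
qed

lemma lead_coeff_commute:
  assumes "commute P Z" and "P \<noteq> 0" and "Z \<noteq> 0"
  shows "lead_coeff P * (\<sigma> ^^ degree P) (lead_coeff Z) = lead_coeff Z * (\<sigma> ^^ degree Z) (lead_coeff P)"
  using assms lead_coeff_ore_mult[of P Z] lead_coeff_ore_mult[of Z P] by (simp add: commute_def)

lemma degree_0_if_commute_nonscalar_constant:
  assumes "degree P = 0" and "P \<notin> ore_K" and "commute P Z"
  shows "degree Z = 0"
proof (rule ccontr)
  assume Z: "degree Z \<noteq> 0"
  obtain p where P: "P = [:p:]"
    using assms(1) by (metis degree_0_id)
  have "degree p \<noteq> 0"
  proof
    assume "degree p = 0"
    then have "P = [:[:coeff p 0:]:]"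
      using P by (metis degree_0_id)
    with assms(2) show False
      by (simp add: ore_K_def)
  qed
  then have "P \<noteq> 0"
    using P by auto
  with assms(3) Z have "p * lead_coeff Z = lead_coeff Z * (\<sigma> ^^ degree Z) p"
    using lead_coeff_commute[of P Z] P by auto
  with Z have "(\<sigma> ^^ degree Z) p = p"
    by (auto simp: mult.commute)
  then have "degree p * degree (\<sigma> [:0, 1:]) ^ degree Z = degree p"
    by (metis degree_sigma_power)
  with \<open>degree p \<noteq> 0\<close> have "degree (\<sigma> [:0, 1:]) ^ degree Z = 1"
    by simp
  with Z degree_sigma_X show False
    by (simp add: power_eq_1_iff)
qed

text \<open>Comparing leading coefficients in \<open>P Z\<^sub>i = Z\<^sub>i P\<close> gives \<open>z\<^sub>1(H) z\<^sub>2 = z\<^sub>1 z\<^sub>2(H)\<close> for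
  \<open>H = \<sigma>\<^bsup>deg P\<^esup>(y)\<close>.\<close>
lemma lead_coeff_proportional_if_commute:
  assumes "degree P > 0" and "commute P Z1" and "commute P Z2"
    and "Z1 \<noteq> 0" and "Z2 \<noteq> 0" and "degree Z1 = degree Z2"
  shows "\<exists>c. lead_coeff Z1 = smult c (lead_coeff Z2)"
proof -
  define p z1 z2 where "p = lead_coeff P" and "z1 = lead_coeff Z1" and "z2 = lead_coeff Z2"
  define \<rho> where "\<rho> = (\<sigma> ^^ degree Z1) p"
  have P: "P \<noteq> 0" and p: "p \<noteq> 0"
    using assms(1) by (auto simp: p_def)
  have e1: "p * (\<sigma> ^^ degree P) z1 = z1 * \<rho>"
    using lead_coeff_commute[OF assms(2) P assms(4)] by (simp add: p_def z1_def \<rho>_def)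
  have e2: "p * (\<sigma> ^^ degree P) z2 = z2 * \<rho>"
    using lead_coeff_commute[OF assms(3) P assms(5)] assms(6) by (simp add: p_def z2_def \<rho>_def)
  have "p * ((\<sigma> ^^ degree P) z1 * z2) = (p * (\<sigma> ^^ degree P) z1) * z2"
    by (simp only: mult.assoc)
  also have "\<dots> = z1 * (z2 * \<rho>)"
    unfolding e1 by (simp only: ac_simps)
  also have "\<dots> = p * (z1 * (\<sigma> ^^ degree P) z2)"
    unfolding e2[symmetric] by (simp only: ac_simps)
  finally have "p * ((\<sigma> ^^ degree P) z1 * z2) = p * (z1 * (\<sigma> ^^ degree P) z2)" .
  then have "pcompose z1 ((\<sigma> ^^ degree P) [:0, 1:]) * z2 = z1 * pcompose z2 ((\<sigma> ^^ degree P) [:0, 1:])"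
    using p by (simp flip: sigma_power_eq_pcompose)
  moreover have "z2 \<noteq> 0"
    using assms(5) by (simp add: z2_def)
  ultimately show ?thesis
    using pcompose_mult_eq_imp_proportional[OF sigma_power_X_degree_gt_1[OF assms(1)]]
    by (simp add: z1_def z2_def)
qed

lemma commute_reduce_degree:
  assumes "degree P > 0" and "commute P Z" and "commute P Z0" and "Z0 \<noteq> 0"
    and "Z = 0 \<or> degree Z \<le> degree Z0"
  shows "\<exists>c. Z - smult [:c:] Z0 = 0 \<or> degree (Z - smult [:c:] Z0) < degree Z0"
proof (cases "Z \<noteq> 0 \<and> degree Z = degree Z0")
  case True
  then obtain c where c: "lead_coeff Z = smult c (lead_coeff Z0)"
    using lead_coeff_proportional_if_commute[OF assms(1-3) _ assms(4)] by blast
  have "degree (Z - smult [:c:] Z0) \<le> degree Z0"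
    using True degree_smult_le[of "[:c:]" Z0] by (intro degree_diff_le) simp_all
  moreover have "coeff (Z - smult [:c:] Z0) (degree Z0) = 0"
    using c True by simp
  ultimately show ?thesis
    using degree_less_if_less_eqI by blast
next
  case False
  with assms(5) show ?thesis
    by (intro exI[of _ 0]) auto
qed

lemma centralizer_linear_dependence:
  assumes "degree P > 0" and "finite I" and "N < card I"
    and "\<And>i. i \<in> I \<Longrightarrow> commute P (z i)" and "\<And>i. i \<in> I \<Longrightarrow> z i = 0 \<or> degree (z i) < N"
  shows "\<exists>c. (\<exists>i\<in>I. c i \<noteq> 0) \<and> (\<Sum>i\<in>I. smult [:c i:] (z i)) = 0"
  using assms(2-)
proof (induction N arbitrary: I z)
  case 0
  then obtain i0 where "i0 \<in> I"
    by fastforce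
  moreover have "(\<Sum>i\<in>I. smult [:1:] (z i)) = 0"
    using "0.prems"(4) by simp
  ultimately show ?case
    by (intro exI[of _ "\<lambda>_. 1"]) auto
next
  case (Suc N)
  show ?case
  proof (cases "\<forall>i\<in>I. z i = 0 \<or> degree (z i) < N")
    case True
    with Suc.prems show ?thesis
      by (intro Suc.IH) auto
  next
    case False
    then obtain i0 where i0: "i0 \<in> I" "z i0 \<noteq> 0" "degree (z i0) = N"
      using Suc.prems(4) less_Suc_eq by blast
    have "\<exists>\<gamma>. z i - smult [:\<gamma>:] (z i0) = 0 \<or> degree (z i - smult [:\<gamma>:] (z i0)) < N"
      if "i \<in> I" for i
      using commute_reduce_degree[OF assms(1) Suc.prems(3)[OF that] Suc.prems(3)[OF i0(1)] i0(2)]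
        Suc.prems(4)[OF that] i0(3) by (simp add: less_Suc_eq_le)
    then obtain \<gamma> where \<gamma>: "\<And>i. i \<in> I \<Longrightarrow>
        z i - smult [:\<gamma> i:] (z i0) = 0 \<or> degree (z i - smult [:\<gamma> i:] (z i0)) < N"
      by metis
    have "\<exists>c. (\<exists>i\<in>I - {i0}. c i \<noteq> 0) \<and>
        (\<Sum>i\<in>I - {i0}. smult [:c i:] (z i - smult [:\<gamma> i:] (z i0))) = 0"
    proof (rule Suc.IH)
      show "finite (I - {i0})" and "N < card (I - {i0})"
        using Suc.prems(1,2) i0(1) by simp_all
      show "commute P (z i - smult [:\<gamma> i:] (z i0))" if "i \<in> I - {i0}" for i
        using that Suc.prems(3) i0(1) by (simp add: commute_diff_right commute_smult_const_right)
      show "z i - smult [:\<gamma> i:] (z i0) = 0 \<or> degree (z i - smult [:\<gamma> i:] (z i0)) < N"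
        if "i \<in> I - {i0}" for i
        using that \<gamma> by simp
    qed
    then show ?thesis
      using linear_dependence_elimination[OF Suc.prems(1) i0(1)] by blast
  qed
qed

lemma ore_power_linear_independent:
  assumes "degree P > 0" and "\<exists>i\<le>K. c i \<noteq> 0"
  shows "(\<Sum>i\<le>K. smult [:c i:] (ore_power P i)) \<noteq> 0"
  using assms(2)
proof (induction K)
  case (Suc K)
  have P: "P \<noteq> 0"
    using assms(1) by auto
  show ?case
  proof (cases "c (Suc K) = 0")
    case True
    with Suc.prems have "\<exists>i\<le>K. c i \<noteq> 0"
      by (metis le_Suc_eq)
    with True Suc.IH show ?thesis
      by simp
  next
    case False
    let ?S = "\<Sum>i\<le>K. smult [:c i:] (ore_power P i)"
    let ?T = "smult [:c (Suc K):] (ore_power P (Suc K))"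
    have T: "degree ?T = Suc K * degree P"
      using False degree_ore_power[OF P, of "Suc K"] by (simp del: ore_power.simps)
    have "degree ?S \<le> K * degree P"
    proof (rule degree_sum_le)
      fix i
      assume "i \<in> {..K}"
      then show "degree (smult [:c i:] (ore_power P i)) \<le> K * degree P"
        using degree_smult_le[of "[:c i:]" "ore_power P i"] by (simp add: degree_ore_power[OF P])
    qed simp
    with T assms(1) have "degree (?S + ?T) = degree ?T"
      by (intro degree_add_eq_right) simp
    with T assms(1) show ?thesis
      by auto
  qed
qed simp

end

section \<open>Centralizers of elements of positive degree\<close>

locale ore_positive_degree = ore_polynomial +
  fixes P :: "'a poly poly"
  assumes degree_P_pos: "degree P > 0"
begin

lemma P_nonzero: "P \<noteq> 0"
  using degree_P_pos by auto

text \<open>The minimality of \<open>gcd (deg Q\<^sub>0) (deg P)\<close> makes it divide every degree occurring in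
  \<open>C(P)\<close>, so the products \<open>P\<^sup>a Q\<^sub>0\<^sup>b\<close> reach all large degrees of \<open>C(P)\<close>.\<close>
definition Q\<^sub>0 :: "'a poly poly" where
  "Q\<^sub>0 = arg_min (\<lambda>Z. gcd (degree Z) (degree P)) (\<lambda>Z. commute P Z \<and> Z \<noteq> 0)"

lemma commute_P_Q\<^sub>0: "commute P Q\<^sub>0" and Q\<^sub>0_nonzero: "Q\<^sub>0 \<noteq> 0"
  using arg_min_natI[of "\<lambda>Z. commute P Z \<and> Z \<noteq> 0" P] P_nonzero by (simp_all add: Q\<^sub>0_def)

lemma gcd_degree_Q\<^sub>0_le:
  "commute P Z \<Longrightarrow> Z \<noteq> 0 \<Longrightarrow> gcd (degree Q\<^sub>0) (degree P) \<le> gcd (degree Z) (degree P)"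
  unfolding Q\<^sub>0_def by (rule arg_min_nat_le) simp

lemma gcd_degree_Q\<^sub>0_dvd_degree:
  assumes "commute P Y" and "Y \<noteq> 0"
  shows "gcd (degree Q\<^sub>0) (degree P) dvd degree Y"
proof -
  let ?q = "degree Q\<^sub>0" and ?y = "degree Y" and ?n = "degree P"
  obtain a b where ab: "gcd (a * ?q + b * ?y) ?n = gcd (gcd ?q ?y) ?n"
    using gcd_linear_combination_nat degree_P_pos by blast
  define Z where "Z = ore_power Q\<^sub>0 a \<cdot> ore_power Y b"
  have "commute P Z"
    unfolding Z_def using commute_P_Q\<^sub>0 assms(1)
    by (intro commute_mult_right commute_ore_power_right)
  moreover have "Z \<noteq> 0"
    unfolding Z_def using Q\<^sub>0_nonzero assms(2) by (simp add: ore_mult_eq_0_iff ore_power_nonzero)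
  ultimately have "gcd ?q ?n \<le> gcd (degree Z) ?n"
    by (rule gcd_degree_Q\<^sub>0_le)
  moreover have "degree Z = a * ?q + b * ?y"
    unfolding Z_def using Q\<^sub>0_nonzero assms(2)
    by (simp add: degree_ore_mult ore_power_nonzero degree_ore_power)
  ultimately have le: "gcd ?q ?n \<le> gcd (gcd ?q ?y) ?n"
    by (simp only: ab)
  have "gcd (gcd ?q ?y) ?n dvd gcd ?q ?n"
    by (rule gcd_greatest[OF dvd_trans[OF gcd_dvd1 gcd_dvd1] gcd_dvd2])
  then have "gcd (gcd ?q ?y) ?n \<le> gcd ?q ?n"
    by (rule dvd_imp_le) (simp add: degree_P_pos)
  with le have "gcd (gcd ?q ?y) ?n = gcd ?q ?n"
    by simp
  moreover have "gcd (gcd ?q ?y) ?n dvd ?y"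
    by (rule dvd_trans[OF gcd_dvd1 gcd_dvd2])
  ultimately show ?thesis
    by simp
qed

definition double_centralizer :: "'a poly poly set" where
  "double_centralizer = {Y. \<forall>Z. commute P Z \<longrightarrow> commute Q\<^sub>0 Z \<longrightarrow> commute Z Y}"

lemma commute_P_if_double_centralizer: "Y \<in> double_centralizer \<Longrightarrow> commute P Y"
  unfolding double_centralizer_def using commute_P_Q\<^sub>0 commute_sym commute_refl by blast

lemma double_centralizer_0: "0 \<in> double_centralizer"
  by (simp add: double_centralizer_def)

lemma double_centralizer_add:
  "A \<in> double_centralizer \<Longrightarrow> B \<in> double_centralizer \<Longrightarrow> A + B \<in> double_centralizer"
  by (simp add: double_centralizer_def commute_add_right)

lemma double_centralizer_smult_const:
  "A \<in> double_centralizer \<Longrightarrow> smult [:c:] A \<in> double_centralizer"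
  by (simp add: double_centralizer_def commute_smult_const_right)

lemma double_centralizer_sum:
  "(\<And>i. i \<in> S \<Longrightarrow> f i \<in> double_centralizer) \<Longrightarrow> sum f S \<in> double_centralizer"
  by (induction S rule: infinite_finite_induct) (simp_all add: double_centralizer_0 double_centralizer_add)

lemma power_mult_power_in_double_centralizer:
  "ore_power P a \<cdot> ore_power Q\<^sub>0 b \<in> double_centralizer"
proof (unfold double_centralizer_def, intro CollectI allI impI)
  fix Z
  assume "commute P Z" and "commute Q\<^sub>0 Z"
  then have "commute Z P" and "commute Z Q\<^sub>0"
    using commute_sym by blast+
  then show "commute Z (ore_power P a \<cdot> ore_power Q\<^sub>0 b)"
    by (intro commute_mult_right commute_ore_power_right)
qed

lemma degree_power_mult_power:
  "degree (ore_power P a \<cdot> ore_power Q\<^sub>0 b) = a * degree P + b * degree Q\<^sub>0"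
  using P_nonzero Q\<^sub>0_nonzero by (simp add: degree_ore_mult ore_power_nonzero degree_ore_power)

lemma reduce_by_double_centralizer:
  assumes "commute P Z" and "Z \<noteq> 0" and "degree P * degree Q\<^sub>0 \<le> degree Z"
  shows "\<exists>M\<in>double_centralizer. Z - M = 0 \<or> degree (Z - M) < degree Z"
proof -
  obtain a b where ab: "a * degree P + b * degree Q\<^sub>0 = degree Z"
    using nat_combination_if_gcd_dvd[OF degree_P_pos gcd_degree_Q\<^sub>0_dvd_degree[OF assms(1,2)] assms(3)]
    by blast
  define M where "M = ore_power P a \<cdot> ore_power Q\<^sub>0 b"
  have M: "M \<in> double_centralizer" "degree M = degree Z"
    using power_mult_power_in_double_centralizer degree_power_mult_power ab by (simp_all add: M_def)
  have "M \<noteq> 0"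
    unfolding M_def using P_nonzero Q\<^sub>0_nonzero by (simp add: ore_mult_eq_0_iff ore_power_nonzero)
  then obtain c where "Z - smult [:c:] M = 0 \<or> degree (Z - smult [:c:] M) < degree Z"
    using commute_reduce_degree[OF degree_P_pos assms(1) commute_P_if_double_centralizer[OF M(1)]] M(2)
    by auto
  moreover have "smult [:c:] M \<in> double_centralizer"
    using M(1) by (rule double_centralizer_smult_const)
  ultimately show ?thesis
    by blast
qed

lemma approx_by_double_centralizer:
  "commute P Z \<Longrightarrow> \<exists>l\<in>double_centralizer. Z - l = 0 \<or> degree (Z - l) \<le> degree P * degree Q\<^sub>0"
proof (induction "degree Z" arbitrary: Z rule: less_induct)
  case less
  show ?case
  proof (cases "Z = 0 \<or> degree Z \<le> degree P * degree Q\<^sub>0")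
    case True
    then show ?thesis
      using double_centralizer_0 by (intro bexI[of _ 0]) auto
  next
    case False
    then obtain M where M: "M \<in> double_centralizer" and "Z - M = 0 \<or> degree (Z - M) < degree Z"
      using reduce_by_double_centralizer[OF less.prems] by auto
    then consider (exact) "Z - M = 0" | (lower) "degree (Z - M) < degree Z"
      by blast
    then show ?thesis
    proof cases
      case exact
      then show ?thesis
        using M by (intro bexI[of _ M]) auto
    next
      case lower
      moreover have "commute P (Z - M)"
        using less.prems commute_P_if_double_centralizer[OF M] by (rule commute_diff_right)
      ultimately obtain l where l: "l \<in> double_centralizer"
        and approx: "Z - M - l = 0 \<or> degree (Z - M - l) \<le> degree P * degree Q\<^sub>0"
        using less.hyps by blast
      show ?thesis
      proof (rule bexI)
        show "M + l \<in> double_centralizer"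
          using M l by (rule double_centralizer_add)
        show "Z - (M + l) = 0 \<or> degree (Z - (M + l)) \<le> degree P * degree Q\<^sub>0"
          using approx by (simp only: diff_diff_eq)
      qed
    qed
  qed
qed

text \<open>Up to degree \<open>deg P \<cdot> deg Q\<^sub>0\<close>, the elements \<open>P\<^sup>i X\<close> of \<open>C(P)\<close> agree with elements of the
  double centralizer; since that remainder space has dimension at most \<open>deg P \<cdot> deg Q\<^sub>0 + 1\<close>, some
  nontrivial \<open>K\<close>-combination \<open>F\<close> of the powers of \<open>P\<close> carries \<open>X\<close> into the double centralizer.\<close>
lemma exists_power_polynomial_multiplier:
  assumes "commute P X"
  shows "\<exists>F. F \<noteq> 0 \<and> F \<cdot> X \<in> double_centralizer \<and> (\<forall>Y. commute P Y \<longrightarrow> commute Y F)"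
proof -
  define N where "N = degree P * degree Q\<^sub>0 + 1"
  have commute_PX: "commute P (ore_power P i \<cdot> X)" for i
    using assms by (intro commute_mult_right commute_ore_power_right commute_refl)
  have "\<forall>i. \<exists>l\<in>double_centralizer. ore_power P i \<cdot> X - l = 0 \<or> degree (ore_power P i \<cdot> X - l) < N"
    using approx_by_double_centralizer[OF commute_PX] by (simp add: N_def less_Suc_eq_le)
  then obtain l where l: "\<And>i. l i \<in> double_centralizer"
    and l_approx: "\<And>i. ore_power P i \<cdot> X - l i = 0 \<or> degree (ore_power P i \<cdot> X - l i) < N"
    by metis
  have "\<exists>c. (\<exists>i\<in>{..N}. c i \<noteq> 0) \<and> (\<Sum>i\<in>{..N}. smult [:c i:] (ore_power P i \<cdot> X - l i)) = 0"
  proof (rule centralizer_linear_dependence[OF degree_P_pos])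
    show "finite {..N}" and "N < card {..N}"
      by simp_all
    show "commute P (ore_power P i \<cdot> X - l i)" for i
      using commute_PX commute_P_if_double_centralizer[OF l] by (rule commute_diff_right)
    show "ore_power P i \<cdot> X - l i = 0 \<or> degree (ore_power P i \<cdot> X - l i) < N" for i
      by (rule l_approx)
  qed
  then obtain c where c: "\<exists>i\<in>{..N}. c i \<noteq> 0"
    and c_zero: "(\<Sum>i\<le>N. smult [:c i:] (ore_power P i \<cdot> X - l i)) = 0"
    by blast
  define F where "F = (\<Sum>i\<le>N. smult [:c i:] (ore_power P i))"
  have "F \<noteq> 0"
    using ore_power_linear_independent[OF degree_P_pos, of N c] c unfolding F_def by auto
  moreover have "F \<cdot> X = (\<Sum>i\<le>N. smult [:c i:] (l i))"
  proof -
    have "F \<cdot> X = (\<Sum>i\<le>N. smult [:c i:] (l i)) + (\<Sum>i\<le>N. smult [:c i:] (ore_power P i \<cdot> X - l i))"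
      by (simp add: F_def ore_mult_sum_left ore_mult_smult_left smult_diff_right sum_subtractf)
    with c_zero show ?thesis
      by simp
  qed
  then have "F \<cdot> X \<in> double_centralizer"
    using l by (simp add: double_centralizer_sum double_centralizer_smult_const)
  moreover have "commute Y F" if "commute P Y" for Y
    using that unfolding F_def
    by (intro commute_sum_right commute_smult_const_right commute_ore_power_right)
      (use commute_sym in blast)
  ultimately show ?thesis
    by blast
qed

lemma commute_Q\<^sub>0_if_commute_P:
  assumes "commute P X"
  shows "commute Q\<^sub>0 X"
proof -
  obtain F where F: "F \<noteq> 0" "F \<cdot> X \<in> double_centralizer" "\<And>Y. commute P Y \<Longrightarrow> commute Y F"
    using exists_power_polynomial_multiplier[OF assms] by blast
  have "commute Q\<^sub>0 (F \<cdot> X)"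
    using F(2) commute_P_Q\<^sub>0 commute_refl unfolding double_centralizer_def by blast
  moreover have "commute Q\<^sub>0 F"
    using F(3) commute_P_Q\<^sub>0 by blast
  ultimately show ?thesis
    using commute_cancel_left[OF F(1)] by blast
qed

theorem centralizer_commutative_pos_degree:
  assumes "commute P X" and "commute P Y"
  shows "commute X Y"
proof -
  obtain F where F: "F \<noteq> 0" "F \<cdot> X \<in> double_centralizer" "\<And>Y. commute P Y \<Longrightarrow> commute Y F"
    using exists_power_polynomial_multiplier[OF assms(1)] by blast
  have "commute Y (F \<cdot> X)"
    using F(2) assms(2) commute_Q\<^sub>0_if_commute_P[OF assms(2)] unfolding double_centralizer_def by blast
  moreover have "commute Y F"
    using F(3) assms(2) by blast
  ultimately have "commute Y X"
    using commute_cancel_left[OF F(1)] by blast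
  then show ?thesis
    by (simp add: commute_sym)
qed

end

section \<open>Centralizers of subsets\<close>

context ore_polynomial
begin

lemma centralizer_commutative:
  assumes "P \<notin> ore_K" and "commute P X" and "commute P Y"
  shows "commute X Y"
proof (cases "degree P = 0")
  case True
  then show ?thesis
    using degree_0_if_commute_nonscalar_constant assms commute_degree_0 by metis
next
  case False
  then interpret ore_positive_degree \<sigma> \<delta> P
    by unfold_locales simp
  show ?thesis
    using assms(2,3) by (rule centralizer_commutative_pos_degree)
qed

lemma ore_K_subset_ore_centralizer: "ore_K \<subseteq> ore_centralizer \<sigma> \<delta> A"
  unfolding ore_centralizer_eq using commute_ore_K commute_sym by blast

lemma ore_centralizer_eq_UNIV: "A \<subseteq> ore_K \<Longrightarrow> ore_centralizer \<sigma> \<delta> A = UNIV"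
  unfolding ore_centralizer_eq using commute_ore_K by blast

lemma ore_centralizer_eq_ore_centralizer_singleton:
  assumes "P \<in> A" and "P \<notin> ore_K" and "Q \<in> ore_centralizer \<sigma> \<delta> A" and "Q \<notin> ore_K"
  shows "ore_centralizer \<sigma> \<delta> A = ore_centralizer \<sigma> \<delta> {Q}"
proof (intro equalityI subsetI)
  fix Z
  assume "Z \<in> ore_centralizer \<sigma> \<delta> A"
  with assms show "Z \<in> ore_centralizer \<sigma> \<delta> {Q}"
    unfolding ore_centralizer_eq using centralizer_commutative by blast
next
  fix Z
  assume Z: "Z \<in> ore_centralizer \<sigma> \<delta> {Q}"
  have "commute P' Z" if "P' \<in> A" for P'
  proof (cases "P' \<in> ore_K")
    case False
    then show ?thesis
      using assms(3,4) Z that centralizer_commutative[of Q P' Z] commute_sym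
      unfolding ore_centralizer_eq by blast
  qed (rule commute_ore_K)
  then show "Z \<in> ore_centralizer \<sigma> \<delta> A"
    unfolding ore_centralizer_eq by blast
qed

end

theorem proposition4p2:
  fixes \<sigma> \<delta> :: "'a::field poly \<Rightarrow> 'a poly"
    and A :: "'a poly poly set"
  assumes "ore_sigma_ok \<sigma>"
    and "ore_delta_ok \<sigma> \<delta>"
  shows "ore_centralizer \<sigma> \<delta> A = UNIV
       \<or> ore_centralizer \<sigma> \<delta> A = ore_K
       \<or> (\<exists>P. P \<notin> ore_K \<and> ore_centralizer \<sigma> \<delta> A = ore_centralizer \<sigma> \<delta> {P})"
proof -
  interpret ore_polynomial \<sigma> \<delta>
    using assms by (rule ore_polynomialI)
  consider "A \<subseteq> ore_K"
    | "ore_centralizer \<sigma> \<delta> A \<subseteq> ore_K"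
    | P Q where "P \<in> A" "P \<notin> ore_K" "Q \<in> ore_centralizer \<sigma> \<delta> A" "Q \<notin> ore_K"
    by blast
  then show ?thesis
  proof cases
    case 1
    then show ?thesis
      using ore_centralizer_eq_UNIV by blast
  next
    case 2
    then show ?thesis
      using ore_K_subset_ore_centralizer by blast
  next
    case 3
    then show ?thesis
      using ore_centralizer_eq_ore_centralizer_singleton by blast
  qed
qed

end
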